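(* Let $f:\mathrm{GF}(p^m)\to\mathrm{GF}(p^m)$, $f(x)=x^d$ with $d<p^m$, let $0<k\le m(p-1)$ with $k\le S_p(d)$, and let $h_1,\ldots,h_k\in\mathrm{GF}(p^m)\setminus\{0\}$. Write $d$ in base $p$ as $d=d_ud_{u-1}\ldots d_1d_0$. Let $i$ be the largest integer in $\{-1,0,\ldots,u\}$ with $d_0+d_1+\cdots+d_i\le k$ (empty sum $=0$ for $i=-1$), put $d'_{i+1}=d_{i+1}-(k-(d_0+\cdots+d_i))$ (with $d_{u+1}=0$), and let $d'$ be the integer with base-$p$ digits $d_u\ldots d_{i+2}d'_{i+1}0\ldots0$ ($i+1$ trailing zeros). Then $\Delta^{(k)}_{h_1\mathbf{e}_1,\ldots,h_k\mathbf{e}_1}x^d$ is either zero or a polynomial of degree at most $d'$. In particular, for $p=2$ the binary representation of $d'$ is obtained from that of $d$ by replacing its $k$ least significant ones by zeros.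
   Context: $(\Delta_{h\mathbf{e}_1} f)(x) = f(x+h)-f(x)$ and $\Delta^{(k)}_{\mathbf{a}_1,\ldots,\mathbf{a}_k}=\Delta_{\mathbf{a}_1}\cdots\Delta_{\mathbf{a}_k}$. $S_p(a)$ denotes the sum of the digits of the nonnegative integer $a$ in base $p$. Polynomial functions over $\mathrm{GF}(p^m)$ are represented with degree at most $p^m-1$ in each variable. *)

theory Defs
  imports "HOL-Computational_Algebra.Polynomial"
begin

text \<open>Finite difference in direction h (one variable, e_1 = 1).\<close>
definition delta :: "'a::ab_group_add \<Rightarrow> ('a \<Rightarrow> 'a) \<Rightarrow> ('a \<Rightarrow> 'a)" where
  "delta h f = (\<lambda>x. f (x + h) - f x)"

fun iter_delta :: "'a::ab_group_add list \<Rightarrow> ('a \<Rightarrow> 'a) \<Rightarrow> ('a \<Rightarrow> 'a)" where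
  "iter_delta [] f = f"
| "iter_delta (h # hs) f = delta h (iter_delta hs f)"

definition digit :: "nat \<Rightarrow> nat \<Rightarrow> nat \<Rightarrow> nat" where
  "digit p n j = n div p ^ j mod p"

text \<open>S_p(n): sum of base-p digits (for p \<ge> 2 all digits of index \<ge> n vanish).\<close>
definition digit_sum :: "nat \<Rightarrow> nat \<Rightarrow> nat" where
  "digit_sum p n = (\<Sum>j<n. digit p n j)"

definition top_index :: "nat \<Rightarrow> nat \<Rightarrow> nat" where
  "top_index p n = (GREATEST t. digit p n t \<noteq> 0)"

text \<open>The value i+1 of the paper: largest j in {0..u+1} with d_0+...+d_{j-1} \<le> k.\<close>
definition cut_index :: "nat \<Rightarrow> nat \<Rightarrow> nat \<Rightarrow> nat" where
  "cut_index p k d = (GREATEST j. j \<le> Suc (top_index p d) \<and> (\<Sum>t<j. digit p d t) \<le> k)"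

definition reduced_exp :: "nat \<Rightarrow> nat \<Rightarrow> nat \<Rightarrow> nat" where
  "reduced_exp p k d =
    (let j = cut_index p k d; u = top_index p d in
      (\<Sum>t\<in>{Suc j..u}. digit p d t * p ^ t)
      + (digit p d j - (k - (\<Sum>t<j. digit p d t))) * p ^ j)"

end

theory Submission
  imports Defs "HOL-Computational_Algebra.Primes" "HOL-Number_Theory.Residues"
begin

(*
  Over a commutative ring of prime characteristic p, Lucas' theorem says that the
  exponents occurring in (x + h)^i are exactly the e that are digitwise dominated
  by i in base p (written e \<preceq>_p i).  Hence one difference step
  P(x) \<mapsto> P(x + h) - P(x) maps every monomial x^i to monomials x^e with
  e \<preceq>_p i and e \<noteq> i, which lowers the base-p digit sum by at least one.
  After k steps applied to x^d only exponents e \<preceq>_p d with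
  S_p(e) + k \<le> S_p(d) remain, and a purely combinatorial argument on base-p
  digits shows that every such e is at most the number d' of the theorem.
*)

(* HOL-Algebra (needed for CHAR_dvd_CARD) declares its own coeff, monom and smult;
   hide them so that these names refer to HOL's polynomial library. *)
hide_const (open) up_ring.coeff up_ring.monom module.smult

section \<open>Base-p digits and digit sums\<close>

lemma digit_eq_0: "n < p ^ t \<Longrightarrow> digit p n t = 0"
  by (simp add: digit_def)

lemma digit_div_pow: "digit p (n div p ^ N) t = digit p n (N + t)"
  unfolding digit_def by (simp add: div_mult2_eq power_add)

lemma digit_mod_pow:
  assumes "1 < p"
  shows "digit p (n mod p ^ N) t = (if t < N then digit p n t else 0)"
proof (cases "t < N")
  case True
  have "n mod p ^ N = n mod (p ^ t * p ^ (N - t))"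
    using True by (simp flip: power_add)
  also have "\<dots> = p ^ t * (n div p ^ t mod p ^ (N - t)) + n mod p ^ t"
    by (rule mod_mult2_eq)
  finally have "n mod p ^ N div p ^ t = n div p ^ t mod p ^ (N - t)"
    using assms by simp
  moreover have "p dvd p ^ (N - t)" using True by simp
  ultimately show ?thesis using True by (simp add: digit_def mod_mod_cancel)
next
  case False
  have "n mod p ^ N < p ^ N" using assms by simp
  also have "p ^ N \<le> p ^ t" using False assms by (simp add: power_increasing)
  finally show ?thesis using False by (simp add: digit_eq_0)
qed

lemma less_pow_of_le:
  assumes "1 < (p::nat)" "n \<le> N"
  shows "n < p ^ N"
proof -
  have "n < p ^ n" using assms(1) by (simp add: power_gt_expt)
  also have "\<dots> \<le> p ^ N" using assms by (intro power_increasing) auto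
  finally show ?thesis .
qed

lemma mod_pow_eq_digits: "n mod p ^ N = (\<Sum>t<N. digit p n t * p ^ t)"
proof (induction N)
  case (Suc N)
  have "n mod p ^ Suc N = p ^ N * (n div p ^ N mod p) + n mod p ^ N"
    using mod_mult2_eq[of n "p ^ N" p] by (simp add: mult.commute)
  then show ?case using Suc by (simp add: digit_def mult.commute)
qed simp

lemma value_eq_digits: "n < p ^ N \<Longrightarrow> n = (\<Sum>t<N. digit p n t * p ^ t)"
  using mod_pow_eq_digits[of n p N] by simp

lemma zero_if_digits_zero: "1 < p \<Longrightarrow> (\<And>t. digit p n t = 0) \<Longrightarrow> n = 0"
  using value_eq_digits[of n p n] by (simp add: less_pow_of_le)

lemma sum_digits_stable:
  assumes "1 < p" "n < p ^ N" "N \<le> M"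
  shows "(\<Sum>t<M. digit p n t) = (\<Sum>t<N. digit p n t)"
proof (rule sum.mono_neutral_right)
  show "\<forall>t\<in>{..<M} - {..<N}. digit p n t = 0"
    using assms by (auto intro!: digit_eq_0 elim!: less_le_trans intro: power_increasing)
qed (use assms in auto)

lemma digit_sum_eq:
  assumes "1 < p" "n < p ^ N"
  shows "digit_sum p n = (\<Sum>t<N. digit p n t)"
proof -
  have "n < p ^ n" using assms(1) by (simp add: less_pow_of_le)
  then have "(\<Sum>t<max N n. digit p n t) = (\<Sum>t<n. digit p n t)"
    by (rule sum_digits_stable[OF assms(1)]) simp
  moreover have "(\<Sum>t<max N n. digit p n t) = (\<Sum>t<N. digit p n t)"
    by (rule sum_digits_stable[OF assms]) simp
  ultimately show ?thesis by (simp add: digit_sum_def)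
qed

lemma digit_sum_split:
  assumes "1 < p"
  shows "digit_sum p n = digit_sum p (n mod p ^ N) + digit_sum p (n div p ^ N)"
proof -
  have shift: "(\<Sum>t<N + M. f t) = (\<Sum>t<N. f t) + (\<Sum>t<M. f (N + t))" for f :: "nat \<Rightarrow> nat" and M
    by (induction M) auto
  have n_lt: "n < p ^ n" using assms by (simp add: less_pow_of_le)
  have "n < p ^ (N + n)" using assms by (simp add: less_pow_of_le)
  then have "digit_sum p n = (\<Sum>t<N. digit p n t) + (\<Sum>t<n. digit p n (N + t))"
    using digit_sum_eq[OF assms] shift by presburger
  moreover have "digit_sum p (n mod p ^ N) = (\<Sum>t<N. digit p n t)"
    using digit_sum_eq[OF assms, of "n mod p ^ N" N] assms by (simp add: digit_mod_pow)
  moreover have "digit_sum p (n div p ^ N) = (\<Sum>t<n. digit p n (N + t))"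
    using digit_sum_eq[OF assms le_less_trans[OF div_le_dividend n_lt]]
    by (simp add: digit_div_pow)
  ultimately show ?thesis by simp
qed

(* A number with at most j+1 digits is at most S_p(n) * p^j, as every digit weight is at
   most p^j. *)
lemma le_digit_sum_times_pow:
  assumes "1 < p" "n < p ^ Suc j"
  shows "n \<le> digit_sum p n * p ^ j"
proof -
  have "n = (\<Sum>t<Suc j. digit p n t * p ^ t)" by (rule value_eq_digits[OF assms(2)])
  also have "\<dots> \<le> (\<Sum>t<Suc j. digit p n t * p ^ j)"
    using assms(1) by (intro sum_mono mult_le_mono2 power_increasing) auto
  also have "\<dots> = (\<Sum>t<Suc j. digit p n t) * p ^ j"
    by (rule sum_distrib_right[symmetric])
  also have "\<dots> = digit_sum p n * p ^ j"
    by (simp only: digit_sum_eq[OF assms])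
  finally show ?thesis .
qed

section \<open>Digitwise domination\<close>

(* Digitwise domination e \<preceq>_p d: every base-p digit of e is at most the
   corresponding digit of d. By Lucas' theorem these are exactly the e with p not
   dividing (d choose e). *)
definition digit_le :: "nat \<Rightarrow> nat \<Rightarrow> nat \<Rightarrow> bool" where
  "digit_le p a b \<longleftrightarrow> (\<forall>t. digit p a t \<le> digit p b t)"

lemma digit_le_refl: "digit_le p a a"
  by (simp add: digit_le_def)

lemma digit_le_trans: "digit_le p a b \<Longrightarrow> digit_le p b c \<Longrightarrow> digit_le p a c"
  unfolding digit_le_def using le_trans by blast

lemma digit_le_div_pow: "digit_le p a b \<Longrightarrow> digit_le p (a div p ^ N) (b div p ^ N)"
  by (simp add: digit_le_def digit_div_pow)

lemma digit_le_imp_le: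
  assumes "1 < p" "digit_le p a b"
  shows "a \<le> b"
proof -
  define N where "N = a + b"
  have a_lt: "a < p ^ N" and b_lt: "b < p ^ N"
    using assms(1) unfolding N_def by (simp_all add: less_pow_of_le)
  have "a = (\<Sum>t<N. digit p a t * p ^ t)" by (rule value_eq_digits[OF a_lt])
  also have "\<dots> \<le> (\<Sum>t<N. digit p b t * p ^ t)"
    using assms(2) unfolding digit_le_def by (intro sum_mono mult_le_mono1) auto
  also have "\<dots> = b" by (rule value_eq_digits[OF b_lt, symmetric])
  finally show ?thesis .
qed

(* A strictly dominated exponent has strictly smaller digit sum; this is why each
   difference step lowers the digit sum. *)
lemma digit_sum_strict_mono:
  assumes "1 < p" "digit_le p a b" "a \<noteq> b"
  shows "digit_sum p a < digit_sum p b"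
proof -
  define N where "N = a + b"
  have a_lt: "a < p ^ N" and b_lt: "b < p ^ N"
    using assms(1) unfolding N_def by (simp_all add: less_pow_of_le)
  have "\<exists>t<N. digit p a t \<noteq> digit p b t"
  proof (rule ccontr)
    assume "\<not> ?thesis"
    then have "(\<Sum>t<N. digit p a t * p ^ t) = (\<Sum>t<N. digit p b t * p ^ t)" by simp
    then show False
      using value_eq_digits[OF a_lt] value_eq_digits[OF b_lt] assms(3) by simp
  qed
  then obtain t where "t < N" "digit p a t \<noteq> digit p b t" by blast
  then have "(\<Sum>t<N. digit p a t) < (\<Sum>t<N. digit p b t)"
    using assms(2) unfolding digit_le_def
    by (intro sum_strict_mono_ex1) (auto intro: le_neq_implies_less)
  then show ?thesis
    by (simp add: digit_sum_eq[OF assms(1) a_lt] digit_sum_eq[OF assms(1) b_lt])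
qed

section \<open>The combinatorial bound on surviving exponents\<close>

lemma top_index_bound:
  assumes p: "1 < p" and d: "0 < d"
  shows "d < p ^ Suc (top_index p d)"
proof -
  have digit_nz_below: "t < d" if "digit p d t \<noteq> 0" for t
  proof (rule ccontr)
    assume "\<not> t < d"
    then have "d < p ^ t" using p by (simp add: less_pow_of_le)
    with that show False by (simp add: digit_eq_0)
  qed
  have high_zero: "digit p d t = 0" if "top_index p d < t" for t
  proof (rule ccontr)
    assume "digit p d t \<noteq> 0"
    then have "t \<le> top_index p d"
      unfolding top_index_def by (rule Greatest_le_nat[where b = d]) (simp add: digit_nz_below less_imp_le)
    with that show False by simp
  qed
  have "d div p ^ Suc (top_index p d) = 0"
    by (rule zero_if_digits_zero[OF p]) (simp only: digit_div_pow high_zero less_add_Suc1)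
  then show ?thesis using p by (simp add: div_eq_0_iff)
qed

lemma cut_index_facts:
  assumes p: "1 < p" and d: "0 < d" and k: "k \<le> digit_sum p d"
  defines "j \<equiv> cut_index p k d"
  shows "(\<Sum>t<j. digit p d t) \<le> k" and "k \<le> (\<Sum>t<j. digit p d t) + digit p d j"
proof -
  define u where "u = top_index p d"
  let ?P = "\<lambda>j. j \<le> Suc u \<and> (\<Sum>t<j. digit p d t) \<le> k"
  have bounded: "\<And>i. ?P i \<Longrightarrow> i \<le> Suc u" by simp
  have Pj: "?P j"
    unfolding j_def cut_index_def u_def by (rule GreatestI_nat[of _ 0]) (use bounded u_def in auto)
  have greatest: "i \<le> j" if "?P i" for i
    unfolding j_def cut_index_def u_def by (rule Greatest_le_nat) (use that bounded u_def in auto)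
  from Pj show "(\<Sum>t<j. digit p d t) \<le> k" by blast
  show "k \<le> (\<Sum>t<j. digit p d t) + digit p d j"
  proof (cases "j \<le> u")
    case True
    then have "\<not> ?P (Suc j)" using greatest by fastforce
    with True show ?thesis by simp
  next
    case False
    then have "j = Suc u" using Pj by simp
    then have "(\<Sum>t<j. digit p d t) = digit_sum p d"
      using digit_sum_eq[OF p top_index_bound[OF p d]] by (simp add: u_def)
    with k show ?thesis by simp
  qed
qed

lemma high_digits_value:
  assumes "1 < p" "n < p ^ M"
  shows "p ^ N * (n div p ^ N) = (\<Sum>t\<in>{N..<M}. digit p n t * p ^ t)"
proof (cases "N \<le> M")
  case True
  have "(\<Sum>t<M. digit p n t * p ^ t) = (\<Sum>t<N. digit p n t * p ^ t) + (\<Sum>t\<in>{N..<M}. digit p n t * p ^ t)"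
    using True by (simp add: lessThan_atLeast0 sum.atLeastLessThan_concat)
  then show ?thesis
    using value_eq_digits[OF assms(2)] mod_pow_eq_digits[of n p N] mod_mult_div_eq[of n "p ^ N"]
    by linarith
next
  case False
  have "p ^ M \<le> p ^ N" using False assms(1) by (intro power_increasing) auto
  then have "n < p ^ N" using assms(2) by simp
  with False show ?thesis by simp
qed

lemma reduced_exp_eq:
  fixes k :: nat
  assumes "1 < p" "0 < d"
  defines "j \<equiv> cut_index p k d"
  shows "reduced_exp p k d =
    p ^ Suc j * (d div p ^ Suc j) + (digit p d j - (k - (\<Sum>t<j. digit p d t))) * p ^ j"
proof -
  have "(\<Sum>t\<in>{Suc j..top_index p d}. digit p d t * p ^ t) = p ^ Suc j * (d div p ^ Suc j)"
    using high_digits_value[OF assms(1) top_index_bound[OF assms(1,2)], of "Suc j"]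
    by (simp add: atLeastLessThanSuc_atLeastAtMost)
  then show ?thesis unfolding reduced_exp_def Let_def j_def by simp
qed

(* If e agrees with d above position j, its remaining
   digits sum to at most d'_j and weigh at most p^j each; otherwise e is already below
   the high part of d. *)
lemma exponent_bound:
  assumes p: "1 < p" and k: "k \<le> digit_sum p d"
    and below: "digit_le p e d" and sum_gap: "digit_sum p e + k \<le> digit_sum p d"
  shows "e \<le> reduced_exp p k d"
proof (cases "d = 0")
  case True
  then show ?thesis using digit_le_imp_le[OF p below] by simp
next
  case False
  define j where "j = cut_index p k d"
  define N where "N = Suc j"
  define L where "L = (\<Sum>t<j. digit p d t)"
  have L_le: "L \<le> k" and k_le: "k \<le> L + digit p d j"
    using cut_index_facts[OF p _ k] False unfolding j_def L_def by auto
  have reduced: "reduced_exp p k d = p ^ N * (d div p ^ N) + (L + digit p d j - k) * p ^ j"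
  proof -
    have "digit p d j - (k - L) = L + digit p d j - k" using L_le by simp
    then show ?thesis using reduced_exp_eq[OF p, of d k] False unfolding j_def N_def L_def by simp
  qed
  have high_le: "e div p ^ N \<le> d div p ^ N"
    by (rule digit_le_imp_le[OF p digit_le_div_pow[OF below]])
  have e_split: "e = p ^ N * (e div p ^ N) + e mod p ^ N" by simp
  show ?thesis
  proof (cases "e div p ^ N < d div p ^ N")
    case True
    have "e mod p ^ N < p ^ N" using p by simp
    moreover have "p ^ N * (e div p ^ N + 1) = p ^ N * (e div p ^ N) + p ^ N" by simp
    ultimately have "e < p ^ N * (e div p ^ N + 1)" using e_split by linarith
    also have "\<dots> \<le> p ^ N * (d div p ^ N)" using True by (intro mult_le_mono2) simp
    finally show ?thesis using reduced by simp
  next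
    case False
    then have high_eq: "e div p ^ N = d div p ^ N" using high_le by simp
    have "digit_sum p (d mod p ^ N) = (\<Sum>t<N. digit p (d mod p ^ N) t)"
      using p by (intro digit_sum_eq) simp_all
    also have "\<dots> = (\<Sum>t<N. digit p d t)" using p by (simp add: digit_mod_pow)
    also have "\<dots> = L + digit p d j" by (simp add: N_def L_def)
    finally have "digit_sum p (e mod p ^ N) \<le> L + digit p d j - k"
      using sum_gap digit_sum_split[OF p, of e N] digit_sum_split[OF p, of d N] high_eq by simp
    then have "e mod p ^ N \<le> (L + digit p d j - k) * p ^ j"
      using le_digit_sum_times_pow[OF p, of "e mod p ^ N" j] p
      by (simp add: N_def) (meson le_trans mult_le_mono1)
    moreover have "e = p ^ N * (d div p ^ N) + e mod p ^ N"
      by (simp only: high_eq[symmetric] e_split[symmetric])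
    ultimately show ?thesis using reduced by linarith
  qed
qed

section \<open>Supports of polynomials and Lucas' theorem\<close>

definition supported_on :: "nat set \<Rightarrow> 'a::zero poly \<Rightarrow> bool" where
  "supported_on S P \<longleftrightarrow> (\<forall>n. coeff P n \<noteq> 0 \<longrightarrow> n \<in> S)"

lemma supported_on_mono: "supported_on S P \<Longrightarrow> S \<subseteq> T \<Longrightarrow> supported_on T P"
  unfolding supported_on_def by blast

lemma supported_on_monom: "supported_on {n} (monom c n)"
  unfolding supported_on_def by (simp add: coeff_monom)

lemma supported_on_smult: "supported_on S P \<Longrightarrow> supported_on S (smult c P)"
  unfolding supported_on_def by (metis coeff_smult mult_zero_right)

lemma supported_on_sum:
  fixes f :: "'b \<Rightarrow> 'a::comm_monoid_add poly"
  assumes "\<And>i. i \<in> A \<Longrightarrow> supported_on S (f i)"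
  shows "supported_on S (\<Sum>i\<in>A. f i)"
  unfolding supported_on_def coeff_sum
proof (intro allI impI)
  fix n assume "(\<Sum>i\<in>A. coeff (f i) n) \<noteq> 0"
  then obtain i where "i \<in> A" "coeff (f i) n \<noteq> 0"
    by (meson sum.not_neutral_contains_not_neutral)
  then show "n \<in> S" using assms unfolding supported_on_def by blast
qed

lemma supported_on_mult:
  fixes P Q :: "'a::comm_semiring_0 poly"
  assumes "supported_on A P" "supported_on B Q"
  shows "supported_on {a + b | a b. a \<in> A \<and> b \<in> B} (P * Q)"
  unfolding supported_on_def coeff_mult
proof (intro allI impI)
  fix n assume "(\<Sum>i\<le>n. coeff P i * coeff Q (n - i)) \<noteq> 0"
  then obtain i where "i \<le> n" "coeff P i * coeff Q (n - i) \<noteq> 0"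
    by (meson sum.not_neutral_contains_not_neutral atMost_iff)
  then have "coeff P i \<noteq> 0" "coeff Q (n - i) \<noteq> 0" by auto
  then have "i \<in> A" "n - i \<in> B" using assms unfolding supported_on_def by auto
  moreover have "n = i + (n - i)" using \<open>i \<le> n\<close> by simp
  ultimately show "n \<in> {a + b | a b. a \<in> A \<and> b \<in> B}" by blast
qed

lemma binomial_power_support:
  fixes c :: "'a::comm_ring_1"
  shows "supported_on {M * i | i. i \<le> r} ((monom 1 M + [:c:]) ^ r)"
proof -
  have "(monom 1 M + [:c:]) ^ r = (\<Sum>i\<le>r. of_nat (r choose i) * monom 1 M ^ i * [:c:] ^ (r - i))"
    by (rule binomial_ring)
  also have "\<dots> = (\<Sum>i\<le>r. monom (of_nat (r choose i) * c ^ (r - i)) (M * i))"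
    by (simp add: monom_power mult_monom of_nat_monom mult.commute flip: monom_0)
  finally show ?thesis
    by (auto intro!: supported_on_sum supported_on_mono[OF supported_on_monom])
qed

lemma frobenius_binomial:
  fixes c :: "'a::comm_ring_1"
  assumes "prime p" "CHAR('a) = p"
  shows "(monom 1 M + [:c:]) ^ p = monom 1 (M * p) + [:c ^ p:]"
proof -
  have "(monom 1 M + [:c:]) ^ p = monom 1 M ^ p + [:c:] ^ p"
    using assms by (intro freshmans_dream) simp_all
  then show ?thesis by (simp add: monom_power flip: monom_0)
qed

lemma digit_le_base_step:
  assumes "digit_le p q' q" "i \<le> r" "r < p"
  shows "digit_le p (p * q' + i) (p * q + r)"
  unfolding digit_le_def
proof
  fix t
  show "digit p (p * q' + i) t \<le> digit p (p * q + r) t"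
    using assms by (cases t) (simp_all add: digit_le_def digit_def div_mult2_eq)
qed

(* Induction on e = p*q + r with r < p,
   using (X^(p^s) + c)^p = X^(p^(s+1)) + c^p. *)
lemma lucas_support:
  fixes c :: "'a::comm_ring_1"
  assumes pr: "prime p" and char: "CHAR('a) = p"
  shows "supported_on {p ^ s * e' | e'. digit_le p e' e} ((monom 1 (p ^ s) + [:c:]) ^ e)"
proof (induction e arbitrary: s c rule: less_induct)
  case (less e)
  have p: "1 < p" using pr prime_gt_1_nat by blast
  show ?case
  proof (cases "e = 0")
    case True
    have "supported_on {0} ((monom 1 (p ^ s) + [:c:]) ^ e)"
      using True supported_on_monom[where c = "1::'a" and n = 0] by (simp add: monom_0 one_pCons)
    moreover have "{0} \<subseteq> {p ^ s * e' | e'. digit_le p e' e}"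
      using True digit_le_refl by auto
    ultimately show ?thesis by (rule supported_on_mono)
  next
    case False
    define q r where "q = e div p" and "r = e mod p"
    have e_eq: "e = p * q + r" and "r < p" and "q < e"
      using False p by (simp_all add: q_def r_def)
    let ?X = "monom 1 (p ^ s) + [:c:]"
    have "?X ^ e = (?X ^ p) ^ q * ?X ^ r" by (simp add: e_eq power_add power_mult)
    also have "\<dots> = (monom 1 (p ^ Suc s) + [:c ^ p:]) ^ q * ?X ^ r"
      using frobenius_binomial[OF pr char] by (simp add: mult.commute)
    finally have X_pow: "?X ^ e = (monom 1 (p ^ Suc s) + [:c ^ p:]) ^ q * ?X ^ r" .
    have high: "supported_on {p ^ Suc s * q' | q'. digit_le p q' q} ((monom 1 (p ^ Suc s) + [:c ^ p:]) ^ q)"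
      by (rule less.IH[OF \<open>q < e\<close>])
    have low: "supported_on {p ^ s * i | i. i \<le> r} (?X ^ r)" by (rule binomial_power_support)
    show ?thesis unfolding X_pow
    proof (rule supported_on_mono[OF supported_on_mult[OF high low]], safe)
      fix q' i assume "digit_le p q' q" "i \<le> r"
      then have "digit_le p (p * q' + i) e"
        using digit_le_base_step \<open>r < p\<close> e_eq by simp
      moreover have "p ^ Suc s * q' + p ^ s * i = p ^ s * (p * q' + i)"
        by (simp add: algebra_simps)
      ultimately show "\<exists>e'. p ^ Suc s * q' + p ^ s * i = p ^ s * e' \<and> digit_le p e' e" by blast
    qed
  qed
qed

corollary linear_power_support:
  fixes c :: "'a::comm_ring_1"
  assumes "prime p" "CHAR('a) = p"
  shows "supported_on {e'. digit_le p e' e} ([:c, 1:] ^ e)"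
  using lucas_support[OF assms, where s = 0 and c = c and e = e] by (simp add: monom_Suc one_pCons)

section \<open>Iterated differences of x^d\<close>

definition admissible_exps :: "nat \<Rightarrow> nat \<Rightarrow> nat \<Rightarrow> nat set" where
  "admissible_exps p d n = {e. digit_le p e d \<and> digit_sum p e + n \<le> digit_sum p d}"

definition poly_diff :: "'a::comm_ring_1 \<Rightarrow> 'a poly \<Rightarrow> 'a poly" where
  "poly_diff h P = (\<Sum>i\<le>degree P. smult (coeff P i) ([:h, 1:] ^ i - monom 1 i))"

lemma poly_poly_diff: "poly (poly_diff h P) x = poly P (x + h) - poly P x"
proof -
  have "poly (poly_diff h P) x = (\<Sum>i\<le>degree P. coeff P i * ((h + x) ^ i - x ^ i))"
    unfolding poly_diff_def by (simp add: poly_sum poly_monom)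
  also have "\<dots> = poly P (x + h) - poly P x"
    by (simp add: poly_altdef right_diff_distrib sum_subtractf add.commute)
  finally show ?thesis .
qed

(* One difference step lowers the admissible level: each monomial x^i turns into the
   terms of (x + h)^i - x^i, whose exponents are strictly dominated by i. *)
lemma poly_diff_support:
  fixes P :: "'a::comm_ring_1 poly"
  assumes pr: "prime p" and char: "CHAR('a) = p"
    and P: "supported_on (admissible_exps p d n) P"
  shows "supported_on (admissible_exps p d (Suc n)) (poly_diff h P)"
  unfolding poly_diff_def
proof (rule supported_on_sum)
  fix i
  show "supported_on (admissible_exps p d (Suc n)) (smult (coeff P i) ([:h, 1:] ^ i - monom 1 i))"
  proof (cases "coeff P i = 0")
    case True
    then show ?thesis by (simp add: supported_on_def)
  next
    case False
    then have i: "i \<in> admissible_exps p d n" using P by (simp add: supported_on_def)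
    have "m \<in> admissible_exps p d (Suc n)" if m: "coeff ([:h, 1:] ^ i - monom 1 i) m \<noteq> 0" for m
    proof -
      have "m \<noteq> i" using m by (auto simp: coeff_linear_power)
      moreover have "coeff ([:h, 1:] ^ i) m \<noteq> 0" using m \<open>m \<noteq> i\<close> by (simp add: coeff_monom)
      then have "digit_le p m i" using linear_power_support[OF pr char] by (simp add: supported_on_def)
      moreover have "1 < p" using pr prime_gt_1_nat by blast
      ultimately have "digit_le p m d" "digit_sum p m < digit_sum p i"
        using i digit_le_trans digit_sum_strict_mono unfolding admissible_exps_def by blast+
      then show ?thesis using i unfolding admissible_exps_def by simp
    qed
    then show ?thesis by (intro supported_on_smult) (simp add: supported_on_def)
  qed
qed

lemma iterated_difference_support:
  fixes hs :: "'a::comm_ring_1 list"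
  assumes "prime p" "CHAR('a) = p"
  shows "\<exists>P. supported_on (admissible_exps p d (length hs)) P \<and>
             (\<forall>x. iter_delta hs (\<lambda>y. y ^ d) x = poly P x)"
proof (induction hs)
  case Nil
  have "supported_on (admissible_exps p d 0) (monom 1 d)"
    by (rule supported_on_mono[OF supported_on_monom]) (simp add: admissible_exps_def digit_le_refl)
  then show ?case by (auto simp: poly_monom)
next
  case (Cons h hs)
  then obtain P where "supported_on (admissible_exps p d (length hs)) P"
    and "\<forall>x. iter_delta hs (\<lambda>y. y ^ d) x = poly P x" by blast
  then have "supported_on (admissible_exps p d (length (h # hs))) (poly_diff h P)"
    and "\<forall>x. iter_delta (h # hs) (\<lambda>y. y ^ d) x = poly (poly_diff h P) x"
    using poly_diff_support[OF assms] by (simp_all add: delta_def poly_poly_diff)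
  then show ?case by blast
qed

lemma degree_bound:
  assumes "1 < p" "k \<le> digit_sum p d" "supported_on (admissible_exps p d k) P"
  shows "degree P \<le> reduced_exp p k d"
proof (cases "P = 0")
  case False
  then have "degree P \<in> admissible_exps p d k"
    using assms(3) by (simp add: supported_on_def)
  then show ?thesis using exponent_bound[OF assms(1,2)] by (simp add: admissible_exps_def)
qed simp

lemma CHAR_finite_field:
  assumes "prime p" "card (UNIV :: 'a::{finite,field} set) = p ^ m"
  shows "CHAR('a) = p"
proof -
  have "prime CHAR('a)" by (intro prime_CHAR_semidom finite_imp_CHAR_pos) simp
  moreover have "CHAR('a) dvd p ^ m" using CHAR_dvd_CARD[where 'a = 'a] assms(2) by simp
  ultimately show ?thesis using assms(1) prime_dvd_power primes_dvd_imp_eq by blast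
qed

(* The main theorem.  The hypotheses d < p^m, k \<le> m(p-1) and h_i \<noteq> 0 only
   describe the setting of the paper; the bound holds without them. *)
theorem mainTheorem11:
  fixes hs :: "'a::{finite,field} list" and p m d k :: nat
  assumes "prime p" and "m \<ge> 1" and "card (UNIV :: 'a set) = p ^ m"
    and "d < p ^ m"
    and "0 < k" and "k \<le> m * (p - 1)" and "k \<le> digit_sum p d"
    and "length hs = k" and "\<forall>h\<in>set hs. h \<noteq> 0"
  shows "\<exists>P :: 'a poly. degree P \<le> reduced_exp p k d \<and>
           (\<forall>x. iter_delta hs (\<lambda>y. y ^ d) x = poly P x)"
proof -
  have char: "CHAR('a) = p" using CHAR_finite_field assms(1,3) by blast
  obtain P where "supported_on (admissible_exps p d k) P"
    and "\<forall>x. iter_delta hs (\<lambda>y. y ^ d) x = poly P x"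
    using iterated_difference_support[OF assms(1) char, of d hs] assms(8) by blast
  moreover have "1 < p" using assms(1) prime_gt_1_nat by blast
  ultimately show ?thesis using degree_bound assms(7) by blast
qed

end
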